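(* Let $n,t$ be positive integers and let $\mathcal{B}$ be a partition of $[n]$ into $t$ nonempty blocks. Let $\mathcal{B}'\subseteq\mathcal{B}$ be nonempty, let $\ell=\sum_{B\in\mathcal{B}'}|B|$, and let $\langle i_1<i_2<\cdots<i_\ell\rangle$ be the increasing enumeration of $\bigcup_{B\in\mathcal{B}'}B$. Then $K[\underline{i},\mathcal{B}']=K[\underline{i}',\mathcal{B}']$ in each of the following cases: - for every $l\in[\ell-1]$ and all $\underline{i},\underline{i}'$ with $i_l<\underline{i},\underline{i}'\le i_{l+1}$; - for all $\underline{i},\underline{i}'$ with $1\le\underline{i},\underline{i}'\le i_1$; - for all $\underline{i},\underline{i}'$ with $i_\ell<\underline{i},\underline{i}'\le n$.
   Context: Let $A(n)$ be the infinite sequence obtained by concatenating infinitely many copies (segments, numbered $1,2,\ldots$) of $\langle1,2,\ldots,n\rangle$. A position is a pair $(\kappa,v)$ consisting of a segment index $\kappa\ge1$ and a value $v\in[n]$. Positions are ordered lexicographically. A placement of a nonempty $\mathcal{B}'\subseteq\mathcal{B}$ assigns to each $x\in\bigcup_{B\in\mathcal{B}'}B$ a position $(\kappa_x,x)$, with distinct elements at distinct positions. It is valid if, for any two distinct blocks $B,C\in\mathcal{B}'$, no element of $B$ lies strictly between the smallest and the largest positions occupied by elements of $C$. The number of segments used is $\max_x\kappa_x$. $K[\underline{i},\mathcal{B}']$ is the minimum number of segments used by a valid placement of $\mathcal{B}'$ all of whose positions are $\ge(1,\underline{i})$. *)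

theory Defs
  imports Main "HOL-Library.Product_Lexorder" "HOL-Library.Disjoint_Sets"
begin

text \<open>Positions are pairs (segment index, value) of type nat \<times> nat, ordered
lexicographically (Product_Lexorder).  A placement of Bs' is given by a function
kappa assigning each element x of the union of Bs' its segment index; x sits at
position (kappa x, x).\<close>

definition pos :: "(nat \<Rightarrow> nat) \<Rightarrow> nat \<Rightarrow> nat \<times> nat" where
  "pos kappa x = (kappa x, x)"

definition valid_placement :: "nat set set \<Rightarrow> (nat \<Rightarrow> nat) \<Rightarrow> bool" where
  "valid_placement Bs' kappa \<longleftrightarrow>
     (\<forall>x\<in>\<Union>Bs'. 1 \<le> kappa x) \<and>
     (\<forall>B\<in>Bs'. \<forall>C\<in>Bs'. B \<noteq> C \<longrightarrow>
        (\<forall>x\<in>B. \<not> (Min (pos kappa ` C) < pos kappa x \<and> pos kappa x < Max (pos kappa ` C))))"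

definition segments_used :: "nat set set \<Rightarrow> (nat \<Rightarrow> nat) \<Rightarrow> nat" where
  "segments_used Bs' kappa = Max (kappa ` \<Union>Bs')"

definition K :: "nat \<Rightarrow> nat set set \<Rightarrow> nat" where
  "K i Bs' = Inf {m. \<exists>kappa. valid_placement Bs' kappa \<and>
                     (\<forall>x\<in>\<Union>Bs'. (1, i) \<le> pos kappa x) \<and>
                     m = segments_used Bs' kappa}"

end

theory Submission
  imports Defs
begin

text \<open>Every valid placement puts all elements in segments \<open>\<ge> 1\<close>, so the constraint
\<open>(1, i) \<le> (\<kappa> x, x)\<close> only bites for elements in segment 1, where it reads \<open>i \<le> x\<close>.
Hence \<open>K i \<B>'\<close> depends on \<open>i\<close> only through the set of elements of \<open>\<Union>\<B>'\<close> below \<open>i\<close>,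
and this set does not change while \<open>i\<close> ranges over one gap of the increasing
enumeration of \<open>\<Union>\<B>'\<close>.\<close>

lemma K_cong:
  assumes "\<forall>x\<in>\<Union>Bs'. x < i \<longleftrightarrow> x < i'"
  shows "K i Bs' = K i' Bs'"
proof -
  have "(\<forall>x\<in>\<Union>Bs'. (1, i) \<le> pos kappa x) \<longleftrightarrow> (\<forall>x\<in>\<Union>Bs'. (1, i') \<le> pos kappa x)"
    if "valid_placement Bs' kappa" for kappa
  proof -
    have "(1, i) \<le> pos kappa x \<longleftrightarrow> (1, i') \<le> pos kappa x" if "x \<in> \<Union>Bs'" for x
    proof -
      have "1 \<le> kappa x"
        using \<open>valid_placement Bs' kappa\<close> \<open>x \<in> \<Union>Bs'\<close> unfolding valid_placement_def by blast
      moreover have "x < i \<longleftrightarrow> x < i'"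
        using assms \<open>x \<in> \<Union>Bs'\<close> by blast
      ultimately show ?thesis
        unfolding pos_def less_eq_prod_def by auto
    qed
    then show ?thesis by blast
  qed
  then show ?thesis
    unfolding K_def by (intro arg_cong[where f = Inf]) blast
qed

lemma sorted_nth_first_le:
  assumes "sorted xs" and "x \<in> set xs"
  shows "xs ! 0 \<le> x"
proof -
  obtain k where "k < length xs" "x = xs ! k"
    using assms(2) by (auto simp: in_set_conv_nth)
  then show ?thesis
    using sorted_nth_mono[OF assms(1), of 0 k] by simp
qed

lemma sorted_le_nth_last:
  assumes "sorted xs" and "x \<in> set xs"
  shows "x \<le> xs ! (length xs - 1)"
proof -
  obtain k where "k < length xs" "x = xs ! k"
    using assms(2) by (auto simp: in_set_conv_nth)
  then show ?thesis
    using sorted_nth_mono[OF assms(1), of k "length xs - 1"] by simp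
qed

lemma sorted_less_iff_less_nth:
  assumes "sorted xs" and "0 < l" and "l < length xs"
    and "xs ! (l - 1) < i" and "i \<le> xs ! l" and "x \<in> set xs"
  shows "x < i \<longleftrightarrow> x < xs ! l"
proof -
  obtain k where k: "k < length xs" "x = xs ! k"
    using assms(6) by (auto simp: in_set_conv_nth)
  show ?thesis
  proof (cases "k < l")
    case True
    then have "xs ! k \<le> xs ! (l - 1)"
      using sorted_nth_mono[OF assms(1), of k "l - 1"] assms(3) by simp
    then show ?thesis using assms(4,5) k by auto
  next
    case False
    then have "xs ! l \<le> xs ! k"
      using sorted_nth_mono[OF assms(1), of l k] k by simp
    then show ?thesis using assms(5) k by auto
  qed
qed

lemma card_Union_partition_subset:
  assumes "partition_on A Bs" and "finite A" and "Bs' \<subseteq> Bs"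
  shows "card (\<Union>Bs') = (\<Sum>B\<in>Bs'. card B)"
proof (rule card_Union_disjoint)
  show "disjoint Bs'"
    using pairwise_subset[OF partition_onD2[OF assms(1)] assms(3)] .
  show "finite B" if "B \<in> Bs'" for B
  proof (rule finite_subset[OF _ assms(2)])
    show "B \<subseteq> A"
      using that assms(3) partition_onD1[OF assms(1)] by blast
  qed
qed

theorem lemma2:
  fixes n t :: nat and Bs Bs' :: "nat set set" and ell :: nat and ii :: "nat \<Rightarrow> nat"
  assumes "0 < n" and "0 < t"
    and "partition_on {1..n} Bs" and "card Bs = t"
    and "Bs' \<subseteq> Bs" and "Bs' \<noteq> {}"
  defines "ell \<equiv> (\<Sum>B\<in>Bs'. card B)"
    and "ii \<equiv> (\<lambda>l. sorted_list_of_set (\<Union>Bs') ! (l - 1))"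
  shows "(\<forall>l\<in>{1..ell - 1}. \<forall>i i'. ii l < i \<and> i \<le> ii (l + 1) \<and> ii l < i' \<and> i' \<le> ii (l + 1)
            \<longrightarrow> K i Bs' = K i' Bs')
       \<and> (\<forall>i i'. 1 \<le> i \<and> i \<le> ii 1 \<and> 1 \<le> i' \<and> i' \<le> ii 1 \<longrightarrow> K i Bs' = K i' Bs')
       \<and> (\<forall>i i'. ii ell < i \<and> i \<le> n \<and> ii ell < i' \<and> i' \<le> n \<longrightarrow> K i Bs' = K i' Bs')"
proof -
  define xs where "xs = sorted_list_of_set (\<Union>Bs')"
  have "\<Union>Bs' \<subseteq> {1..n}"
    using assms(5) partition_onD1[OF assms(3)] by blast
  then have fin: "finite (\<Union>Bs')"
    using finite_subset by blast
  have sorted: "sorted xs" and set_xs: "set xs = \<Union>Bs'"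
    using fin unfolding xs_def by auto
  have length_xs: "length xs = ell"
    using fin card_Union_partition_subset[OF assms(3) _ assms(5)] unfolding xs_def ell_def by simp
  have ii: "ii l = xs ! (l - 1)" for l
    unfolding ii_def xs_def ..
  show ?thesis
  proof (intro conjI ballI allI impI K_cong)
    fix l i i' x assume "l \<in> {1..ell - 1}" and "x \<in> \<Union>Bs'"
      and "ii l < i \<and> i \<le> ii (l + 1) \<and> ii l < i' \<and> i' \<le> ii (l + 1)"
    then have gap: "xs ! (l - 1) < i" "i \<le> xs ! l" "xs ! (l - 1) < i'" "i' \<le> xs ! l"
      by (simp_all add: ii)
    have l: "0 < l" "l < length xs"
      using \<open>l \<in> {1..ell - 1}\<close> length_xs by auto
    have x: "x \<in> set xs"
      using \<open>x \<in> \<Union>Bs'\<close> set_xs by simp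
    show "x < i \<longleftrightarrow> x < i'"
      using sorted_less_iff_less_nth[OF sorted l gap(1,2) x]
        sorted_less_iff_less_nth[OF sorted l gap(3,4) x] by simp
  next
    fix i i' x assume "1 \<le> i \<and> i \<le> ii 1 \<and> 1 \<le> i' \<and> i' \<le> ii 1" and "x \<in> \<Union>Bs'"
    then show "x < i \<longleftrightarrow> x < i'"
      using sorted_nth_first_le[OF sorted, of x] by (simp add: ii set_xs)
  next
    fix i i' x assume "ii ell < i \<and> i \<le> n \<and> ii ell < i' \<and> i' \<le> n" and "x \<in> \<Union>Bs'"
    then show "x < i \<longleftrightarrow> x < i'"
      using sorted_le_nth_last[OF sorted, of x] by (simp add: ii length_xs set_xs)
  qed
qed

end
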